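(* Let $n \geq 10$, $l = \lfloor n/2 \rfloor$, let $V$ be a real vector space with basis $\varepsilon_1,\dots,\varepsilon_l$, and let $\Delta = \{\sum_{i=1}^l k_i\varepsilon_i \mid k_i \in \{0,\pm1\}\} \setminus \{0\}$ (the root system of the Cartan type Lie superalgebra $H(n)$). Then $\Delta$ has a parabolic subset which is not strongly parabolic.
   Context: A subset $P \subset \Delta$ is parabolic if $\Delta = P \cup -P$ and $\alpha,\beta\in P$, $\alpha+\beta\in\Delta$ imply $\alpha+\beta\in P$. A triangular decomposition $\Delta = \Delta^-\sqcup\Delta^0\sqcup\Delta^+$ is given by some $\lambda\in V^*$ via $\Delta^0 = \Delta\cap\ker\lambda$, $\Delta^\pm = \{\alpha\in\Delta \mid \lambda(\alpha)\gtrless0\}$. $P \subset \Delta$ is strongly parabolic (recursively) if $P = \Delta$, or $P = P^0\sqcup\Delta^+$ for some triangular decomposition (with function $\lambda$) and some $P^0\subset\Delta^0$ which is strongly parabolic as a subset of $\Delta^0$ regarded in the vector space $\ker\lambda$. *)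

theory Defs
  imports "HOL-Analysis.Analysis"
begin

definition parabolic :: "'a::real_vector set \<Rightarrow> 'a set \<Rightarrow> bool" where
  "parabolic D P \<longleftrightarrow> P \<subseteq> D \<and> D = P \<union> uminus ` P \<and>
     (\<forall>a\<in>P. \<forall>b\<in>P. a + b \<in> D \<longrightarrow> a + b \<in> P)"

text \<open>A functional on the subspace
  ker lambda is the restriction of a linear functional on the whole space, so the
  recursion quantifies over linear functionals on the ambient space.\<close>
inductive strongly_parabolic :: "'a::real_vector set \<Rightarrow> 'a set \<Rightarrow> bool" where
  sp_all: "strongly_parabolic D D"
| sp_step: "linear (f :: 'a \<Rightarrow> real) \<Longrightarrow>
     strongly_parabolic {a \<in> D. f a = 0} P0 \<Longrightarrow>
     strongly_parabolic D (P0 \<union> {a \<in> D. f a > 0})"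

text \<open>Root system of H(n): nonzero vectors with all coordinates in {0,1,-1}
  in the space with basis indexed by 'l (of cardinality floor(n/2)).\<close>
definition H_roots :: "(real ^ 'l) set" where
  "H_roots = {v. (\<forall>i. v $ i \<in> {-1, 0, 1}) \<and> v \<noteq> 0}"

end

theory Submission
  imports Defs
begin

text \<open>A strongly parabolic subset P is cut out, level by level, by linear functionals, so
  the roots outside P admit no nontrivial nonnegative relation. In H(n) with at least five
  coordinates, take the functional with weights (4, 5, 10, -2, -1) on five coordinates.
  The roots in its kernel project to 0 or to one of the eight patterns plus or minus u1, ...,
  u4, where u1 + u2 + u3 + u4 = 0 and no sum of two of the patterns -u_i is again a sign
  pattern. Hence keeping the kernel roots that do not project to any u_i is parabolic in
  the kernel, and extending by the positive roots gives a parabolic set whose complement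
  contains the zero-sum family lifting u1, ..., u4.\<close>

lemma strongly_parabolic_subset: "strongly_parabolic D P \<Longrightarrow> P \<subseteq> D"
  by (induction rule: strongly_parabolic.induct) auto

lemma strongly_parabolic_no_nonneg_relation:
  assumes "strongly_parabolic D P" and "finite D" and "\<And>x. 0 \<le> d x"
    and "(\<Sum>x\<in>D - P. d x *\<^sub>R x) = 0" and "x \<in> D - P"
  shows "d x = 0"
  using assms
proof (induction arbitrary: x rule: strongly_parabolic.induct)
  case (sp_all D)
  then show ?case by simp
next
  case (sp_step f D P0)
  define D0 where "D0 = {a \<in> D. f a = 0}"
  define Neg where "Neg = {a \<in> D. f a < 0}"
  have "P0 \<subseteq> D0"
    using strongly_parabolic_subset[OF sp_step.hyps(2)] by (simp add: D0_def)
  then have split: "D - (P0 \<union> {a \<in> D. 0 < f a}) = (D0 - P0) \<union> Neg"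
    and disjoint: "(D0 - P0) \<inter> Neg = {}"
    by (auto simp: D0_def Neg_def)
  have finite: "finite D0" "finite Neg"
    using \<open>finite D\<close> by (auto simp: D0_def Neg_def)
  have sum_split: "(\<Sum>x\<in>D0 - P0. d x *\<^sub>R x) + (\<Sum>x\<in>Neg. d x *\<^sub>R x) = 0"
    using sp_step.prems(3) finite
    by (simp add: split sum.union_disjoint[OF _ _ disjoint])
  have "f (\<Sum>x\<in>D0 - P0. d x *\<^sub>R x) = 0"
    by (simp add: linear_sum[OF sp_step.hyps(1)] linear_cmul[OF sp_step.hyps(1)] D0_def)
  then have "f (\<Sum>x\<in>Neg. d x *\<^sub>R x) = 0"
    using arg_cong[OF sum_split, of f]
    by (simp add: linear_add[OF sp_step.hyps(1)] linear_0[OF sp_step.hyps(1)])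
  then have "(\<Sum>x\<in>Neg. - (d x * f x)) = 0"
    by (simp add: linear_sum[OF sp_step.hyps(1)] linear_cmul[OF sp_step.hyps(1)] sum_negf)
  moreover have "\<forall>x\<in>Neg. 0 \<le> - (d x * f x)"
    using sp_step.prems(2) by (simp add: Neg_def mult_nonneg_nonpos)
  ultimately have "\<forall>x\<in>Neg. - (d x * f x) = 0"
    using sum_nonneg_eq_0_iff[OF finite(2), of "\<lambda>x. - (d x * f x)"] by blast
  then have Neg_zero: "\<forall>x\<in>Neg. d x = 0"
    by (auto simp: Neg_def)
  show ?case
  proof (cases "x \<in> Neg")
    case True
    then show ?thesis using Neg_zero by blast
  next
    case False
    have "(\<Sum>x\<in>D0 - P0. d x *\<^sub>R x) = 0"
      using sum_split Neg_zero by simp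
    moreover have "x \<in> D0 - P0"
      using sp_step.prems(4) False unfolding split by blast
    ultimately show ?thesis
      unfolding D0_def by (rule sp_step.IH[OF finite(1)[unfolded D0_def] sp_step.prems(2)])
  qed
qed

lemma not_strongly_parabolic_if_zero_sum:
  assumes "finite D" and "V \<subseteq> D - P" and "V \<noteq> {}" and "\<Sum>V = 0"
  shows "\<not> strongly_parabolic D P"
proof
  assume sp: "strongly_parabolic D P"
  have "(\<Sum>x\<in>D - P. indicator V x *\<^sub>R x) = \<Sum>V"
  proof (rule sum.mono_neutral_cong_right)
    show "finite (D - P)" using assms(1) by simp
  qed (use assms(2) in \<open>simp_all add: indicator_def\<close>)
  then have "indicator V x = (0::real)" if "x \<in> V" for x
    using that assms(2,4)
    by (intro strongly_parabolic_no_nonneg_relation[OF sp assms(1)]) auto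
  then show False
    using assms(3) by (auto simp: indicator_def)
qed

lemma parabolic_extend:
  fixes f :: "'a::real_vector \<Rightarrow> real"
  assumes "linear f" and symmetric: "\<And>a. a \<in> D \<Longrightarrow> -a \<in> D"
    and "parabolic {a \<in> D. f a = 0} Q"
  shows "parabolic D (Q \<union> {a \<in> D. 0 < f a})"
proof -
  have f_add: "f (a + b) = f a + f b" and f_neg: "f (- a) = - f a" for a b
    using \<open>linear f\<close> by (simp_all add: linear_add linear_neg)
  have kernel: "{a \<in> D. f a = 0} = Q \<union> uminus ` Q"
    and Q_closed: "\<And>a b. a \<in> Q \<Longrightarrow> b \<in> Q \<Longrightarrow> a + b \<in> D \<Longrightarrow> f (a + b) = 0 \<Longrightarrow> a + b \<in> Q"
    using assms(3) by (auto simp: parabolic_def)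
  have Q_sub: "Q \<subseteq> {a \<in> D. f a = 0}" and uminus_Q_sub: "uminus ` Q \<subseteq> {a \<in> D. f a = 0}"
    by (simp_all add: kernel)
  let ?P = "Q \<union> {a \<in> D. 0 < f a}"
  have "a \<in> ?P \<union> uminus ` ?P" if "a \<in> D" for a
  proof -
    consider "0 < f a" | "f a = 0" | "f a < 0" by linarith
    then show ?thesis
    proof cases
      case 1
      then show ?thesis using that by simp
    next
      case 2
      then have "a \<in> Q \<union> uminus ` Q" using that by (simp add: kernel[symmetric])
      then show ?thesis by auto
    next
      case 3
      then have "-a \<in> ?P" using symmetric[OF that] f_neg by simp
      then have "- (- a) \<in> uminus ` ?P" by (rule imageI)
      then show ?thesis by simp
    qed
  qed
  moreover have "uminus ` {a \<in> D. 0 < f a} \<subseteq> D"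
    using symmetric by auto
  moreover have "a + b \<in> ?P" if "a \<in> ?P" "b \<in> ?P" "a + b \<in> D" for a b
  proof (cases "0 < f (a + b)")
    case True
    then show ?thesis using that(3) by simp
  next
    case False
    have "0 \<le> f a" "0 \<le> f b" using that(1,2) Q_sub by auto
    then have "f a = 0" "f b = 0" using False by (simp_all add: f_add)
    then have "a \<in> Q" "b \<in> Q" using that(1,2) by auto
    then show ?thesis using Q_closed that(3) False \<open>f a = 0\<close> \<open>f b = 0\<close> by (simp add: f_add)
  qed
  ultimately show ?thesis
    using Q_sub uminus_Q_sub unfolding parabolic_def by (auto simp del: image_Un)
qed

lemma H_roots_finite: "finite (H_roots :: (real ^ 'l::finite) set)"
proof -
  have "H_roots \<subseteq> vec_lambda ` (PiE UNIV (\<lambda>_::'l. {-1, 0, 1::real}))"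
  proof
    fix v :: "real ^ 'l" assume "v \<in> H_roots"
    then have "vec_nth v \<in> PiE UNIV (\<lambda>_. {-1, 0, 1})"
      by (auto simp: H_roots_def PiE_UNIV_domain)
    then show "v \<in> vec_lambda ` (PiE UNIV (\<lambda>_. {-1, 0, 1}))"
      by (metis image_eqI vec_lambda_eta)
  qed
  then show ?thesis
    by (rule finite_subset) (intro finite_imageI finite_PiE; simp)
qed

lemma H_roots_uminus: "a \<in> H_roots \<Longrightarrow> - a \<in> H_roots"
  by (auto simp: H_roots_def)

type_synonym pattern = "real \<times> real \<times> real \<times> real \<times> real"

definition sign_patterns :: "pattern set" where
  "sign_patterns = {-1, 0, 1} \<times> {-1, 0, 1} \<times> {-1, 0, 1} \<times> {-1, 0, 1} \<times> {-1, 0, 1}"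

definition weight :: "pattern \<Rightarrow> real" where
  "weight = (\<lambda>(c1, c2, c3, c4, c5). 4 * c1 + 5 * c2 + 10 * c3 - 2 * c4 - c5)"

definition circuit :: "pattern set" where
  "circuit = {(-1, 1, 0, 0, 1), (1, -1, 0, -1, 1), (-1, -1, 1, 1, -1), (1, 1, -1, 0, -1)}"

lemma uminus_circuit:
  "uminus ` circuit = {(1, -1, 0, 0, -1), (-1, 1, 0, 1, -1), (1, 1, -1, -1, 1), (-1, -1, 1, 0, 1)}"
  by (simp add: circuit_def)

lemma weight_kernel_sign_patterns:
  assumes "c \<in> sign_patterns" and "weight c = 0"
  shows "c \<in> insert 0 (circuit \<union> uminus ` circuit)"
proof -
  obtain c1 c2 c3 c4 c5 where c: "c = (c1, c2, c3, c4, c5)"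
    by (cases c) auto
  have "c1 = -1 \<or> c1 = 0 \<or> c1 = 1" "c2 = -1 \<or> c2 = 0 \<or> c2 = 1" "c3 = -1 \<or> c3 = 0 \<or> c3 = 1"
    "c4 = -1 \<or> c4 = 0 \<or> c4 = 1" "c5 = -1 \<or> c5 = 0 \<or> c5 = 1"
    using assms(1) by (auto simp: sign_patterns_def c)
  moreover have "4 * c1 + 5 * c2 + 10 * c3 - 2 * c4 - c5 = 0"
    using assms(2) by (simp add: weight_def c)
  ultimately have "c \<in> {(0, 0, 0, 0, 0),
      (-1, 1, 0, 0, 1), (1, -1, 0, -1, 1), (-1, -1, 1, 1, -1), (1, 1, -1, 0, -1),
      (1, -1, 0, 0, -1), (-1, 1, 0, 1, -1), (1, 1, -1, -1, 1), (-1, -1, 1, 0, 1)}"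
    unfolding c by (elim disjE) simp_all
  then show ?thesis
    unfolding uminus_circuit by (auto simp: circuit_def zero_prod_def)
qed

lemma circuit_sum: "\<Sum>circuit = 0"
  by (simp add: circuit_def zero_prod_def)

lemma circuit_weight: "c \<in> circuit \<Longrightarrow> weight c = 0"
  by (auto simp: circuit_def weight_def)

lemma zero_notin_circuit: "0 \<notin> circuit"
  by (simp add: circuit_def zero_prod_def)

lemma circuit_disjoint_uminus: "c \<in> circuit \<Longrightarrow> - c \<notin> circuit"
  by (auto simp: circuit_def)

lemma circuit_sign_patterns: "circuit \<subseteq> sign_patterns"
  by (simp add: circuit_def sign_patterns_def)

lemma neg_circuit_add_notin_circuit:
  assumes "p \<in> insert 0 (uminus ` circuit)" and "q \<in> insert 0 (uminus ` circuit)"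
    and "p + q \<in> sign_patterns"
  shows "p + q \<notin> circuit"
proof -
  have "p \<in> insert (0, 0, 0, 0, 0) (uminus ` circuit)" "q \<in> insert (0, 0, 0, 0, 0) (uminus ` circuit)"
    using assms(1,2) by (simp_all add: zero_prod_def)
  then show ?thesis
    using assms(3) unfolding uminus_circuit
    by (elim insertE emptyE) (simp_all add: circuit_def sign_patterns_def)
qed

locale five_coordinates =
  fixes i1 i2 i3 i4 i5 :: "'l::finite"
  assumes distinct: "distinct [i1, i2, i3, i4, i5]"
begin

definition proj :: "real ^ 'l \<Rightarrow> pattern" where
  "proj a = (a $ i1, a $ i2, a $ i3, a $ i4, a $ i5)"

definition lift :: "pattern \<Rightarrow> real ^ 'l" where
  "lift = (\<lambda>(c1, c2, c3, c4, c5). \<chi> j. if j = i1 then c1 else if j = i2 then c2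
     else if j = i3 then c3 else if j = i4 then c4 else if j = i5 then c5 else 0)"

abbreviation level :: "real ^ 'l \<Rightarrow> real" where
  "level a \<equiv> weight (proj a)"

lemma proj_add: "proj (a + b) = proj a + proj b"
  and proj_uminus: "proj (- a) = - proj a"
  by (simp_all add: proj_def)

lemma linear_level: "linear level"
  by (rule linearI) (simp_all add: proj_def weight_def algebra_simps)

lemma proj_lift: "proj (lift c) = c"
  using distinct by (cases c) (auto simp: proj_def lift_def)

lemma linear_lift: "linear lift"
  by (rule linearI) (auto simp: lift_def vec_eq_iff split: prod.splits)

lemma proj_H_roots: "a \<in> H_roots \<Longrightarrow> proj a \<in> sign_patterns"
  unfolding H_roots_def proj_def sign_patterns_def mem_Times_iff fst_conv snd_conv mem_Collect_eq
  by blast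

lemma lift_H_roots:
  assumes "c \<in> sign_patterns" and "c \<noteq> 0"
  shows "lift c \<in> H_roots"
proof -
  have "proj 0 = 0" by (simp add: proj_def zero_prod_def)
  then have "lift c \<noteq> 0"
    using assms(2) proj_lift by metis
  moreover have "lift c $ j \<in> {-1, 0, 1}" for j
  proof -
    obtain c1 c2 c3 c4 c5 where c: "c = (c1, c2, c3, c4, c5)"
      by (cases c) auto
    have "c1 \<in> {-1, 0, 1}" "c2 \<in> {-1, 0, 1}" "c3 \<in> {-1, 0, 1}" "c4 \<in> {-1, 0, 1}" "c5 \<in> {-1, 0, 1}"
      using assms(1) unfolding c sign_patterns_def mem_Times_iff fst_conv snd_conv by blast+
    moreover have "0 \<in> {-1, 0, 1::real}" by simp
    ultimately show ?thesis
      unfolding c lift_def by (simp del: insert_iff)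
  qed
  ultimately show ?thesis by (simp add: H_roots_def)
qed

definition kernel_part :: "(real ^ 'l) set" where
  "kernel_part = {a \<in> H_roots. level a = 0 \<and> proj a \<notin> circuit}"

lemma parabolic_kernel_part: "parabolic {a \<in> H_roots. level a = 0} kernel_part"
  unfolding parabolic_def
proof (intro conjI ballI impI)
  let ?K = "{a \<in> H_roots. level a = 0}"
  show sub: "kernel_part \<subseteq> ?K"
    by (auto simp: kernel_part_def)
  have level_uminus: "level (- a) = - level a" for a
    by (rule linear_neg[OF linear_level])
  have uminus_K: "- a \<in> ?K" if "a \<in> ?K" for a
    using that H_roots_uminus level_uminus by auto
  have "a \<in> kernel_part \<union> uminus ` kernel_part" if "a \<in> ?K" for a
  proof (cases "proj a \<in> circuit")
    case True
    then have "proj (- a) \<notin> circuit"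
      using circuit_disjoint_uminus by (simp add: proj_uminus)
    then have "- a \<in> kernel_part"
      using uminus_K[OF that] by (simp add: kernel_part_def)
    then have "- (- a) \<in> uminus ` kernel_part" by (rule imageI)
    then show ?thesis by simp
  next
    case False
    then show ?thesis using that by (simp add: kernel_part_def)
  qed
  moreover have "uminus ` kernel_part \<subseteq> ?K"
    using sub uminus_K by blast
  ultimately show "?K = kernel_part \<union> uminus ` kernel_part"
    using sub by blast
next
  fix a b
  assume a: "a \<in> kernel_part" and b: "b \<in> kernel_part"
    and ab: "a + b \<in> {a \<in> H_roots. level a = 0}"
  have proj_kernel_part: "proj c \<in> insert 0 (uminus ` circuit)" if "c \<in> kernel_part" for c
  proof -
    have "c \<in> H_roots" "level c = 0" "proj c \<notin> circuit"
      using that by (simp_all add: kernel_part_def)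
    then show ?thesis
      using weight_kernel_sign_patterns[OF proj_H_roots] by blast
  qed
  have "proj a + proj b \<in> sign_patterns"
    using proj_H_roots[of "a + b"] ab by (simp add: proj_add)
  then have "proj (a + b) \<notin> circuit"
    unfolding proj_add
    by (rule neg_circuit_add_notin_circuit[OF proj_kernel_part[OF a] proj_kernel_part[OF b]])
  then show "a + b \<in> kernel_part"
    using ab by (simp add: kernel_part_def)
qed

lemma lift_circuit_sum: "\<Sum>(lift ` circuit) = 0"
proof -
  have "inj lift" by (metis injI proj_lift)
  then have "\<Sum>(lift ` circuit) = lift (\<Sum>circuit)"
    by (simp add: sum.reindex inj_on_subset linear_sum[OF linear_lift])
  then show ?thesis
    by (simp add: circuit_sum linear_0[OF linear_lift])
qed

theorem exists_parabolic_not_strongly_parabolic: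
  "\<exists>P. parabolic (H_roots :: (real ^ 'l) set) P \<and> \<not> strongly_parabolic H_roots P"
proof (intro exI conjI)
  let ?P = "kernel_part \<union> {a \<in> H_roots. 0 < level a}"
  show "parabolic H_roots ?P"
    using parabolic_extend[OF linear_level H_roots_uminus parabolic_kernel_part] .
  have "lift c \<in> H_roots - ?P" if "c \<in> circuit" for c
  proof -
    have "c \<noteq> 0" using that zero_notin_circuit by blast
    then have "lift c \<in> H_roots"
      using lift_H_roots circuit_sign_patterns that by blast
    moreover have "level (lift c) = 0" and "proj (lift c) \<in> circuit"
      using that by (simp_all add: proj_lift circuit_weight)
    ultimately show ?thesis by (simp add: kernel_part_def)
  qed
  then have "lift ` circuit \<subseteq> H_roots - ?P" by blast
  moreover have "lift ` circuit \<noteq> {}" by (simp add: circuit_def)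
  ultimately show "\<not> strongly_parabolic H_roots ?P"
    by (rule not_strongly_parabolic_if_zero_sum[OF H_roots_finite _ _ lift_circuit_sum])
qed

end

lemma obtain_five_distinct:
  assumes "5 \<le> CARD('l::finite)"
  obtains i1 i2 i3 i4 i5 :: "'l::finite" where "distinct [i1, i2, i3, i4, i5]"
proof -
  obtain S :: "'l set" where "card S = 5"
    using obtain_subset_with_card_n[of 5 "UNIV :: 'l set"] assms by auto
  moreover obtain xs where "set xs = S" "distinct xs"
    using finite_distinct_list[OF finite] by blast
  ultimately have "length xs = 5" by (metis distinct_card)
  then obtain a b c d e where "xs = [a, b, c, d, e]"
    by (auto simp: numeral_eq_Suc length_Suc_conv)
  with \<open>distinct xs\<close> that show ?thesis by blast
qed

theorem mainTheorem4:
  fixes n :: nat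
  assumes "n \<ge> 10" and "CARD('l::finite) = n div 2"
  shows "\<exists>P. parabolic (H_roots :: (real ^ 'l) set) P \<and>
               \<not> strongly_parabolic (H_roots :: (real ^ 'l) set) P"
proof -
  have "5 \<le> CARD('l)" using assms by linarith
  then obtain i1 i2 i3 i4 i5 :: 'l where "distinct [i1, i2, i3, i4, i5]"
    by (rule obtain_five_distinct)
  then interpret five_coordinates i1 i2 i3 i4 i5
    by unfold_locales
  show ?thesis
    by (rule exists_parabolic_not_strongly_parabolic)
qed

end
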